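(* Let $m\ge2$, let $\eta$ be a primitive $m$-th root of unity, and let $F(x,y)=(x+y)^m$. Consider real polynomials $G(x,y)$ such that $G(\eta x,\eta y)=G(x,y)$, $G=1$ on the line $x+y=1$, $G$ has only non-negative coefficients, $G(0,0)=0$, and such that the polynomial $H=(G-F)/(F-1)$ (so that $G=F-H+HF$) has only non-negative coefficients. For such $G$, the number of terms $N(G)$ is either $m+1$ or at least $2m+1$; that is, $N(G)$ lies neither in $\{1,\dots,m\}$ nor in $\{m+2,\dots,2m\}$. Conversely, $m+1$ and every integer $N\ge 2m+1$ occur as $N(G)$ for some such $G$.
   Context: $N(q)$ denotes the number of distinct monomials with nonzero coefficient in $q$. For $G$ as described, $G-F$ is divisible by $F-1$, so $H$ is a polynomial. *)

theory Defs
  imports Complex_Main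
begin

text \<open>Real bivariate polynomials are represented by their coefficient functions:
  c (i,j) is the coefficient of x^i y^j; only finitely many are nonzero.\<close>

type_synonym bipoly = "nat \<times> nat \<Rightarrow> real"

definition supp2 :: "bipoly \<Rightarrow> (nat \<times> nat) set" where
  "supp2 c = {p. c p \<noteq> 0}"

definition is_bipoly :: "bipoly \<Rightarrow> bool" where
  "is_bipoly c \<longleftrightarrow> finite (supp2 c)"

definition beval :: "bipoly \<Rightarrow> 'a::{real_algebra_1,comm_ring_1} \<Rightarrow> 'a \<Rightarrow> 'a" where
  "beval c x y = (\<Sum>p\<in>supp2 c. of_real (c p) * x ^ fst p * y ^ snd p)"

definition nterms :: "bipoly \<Rightarrow> nat" where
  "nterms c = card (supp2 c)"

definition admissible :: "nat \<Rightarrow> complex \<Rightarrow> bipoly \<Rightarrow> bool" where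
  "admissible m \<eta> G \<longleftrightarrow>
     is_bipoly G \<and>
     (\<forall>x y :: complex. beval G (\<eta> * x) (\<eta> * y) = beval G x y) \<and>
     (\<forall>x y :: real. x + y = 1 \<longrightarrow> beval G x y = 1) \<and>
     (\<forall>p. G p \<ge> 0) \<and>
     G (0, 0) = 0 \<and>
     (\<exists>H. is_bipoly H \<and> (\<forall>p. H p \<ge> 0) \<and>
        (\<forall>x y :: real. beval G x y = (x + y) ^ m - beval H x y + beval H x y * (x + y) ^ m))"

end

theory Submission
  imports Defs "HOL-Computational_Algebra.Polynomial"
begin

text \<open>
  Write \<open>Q = H + 1\<close> and \<open>F = (x + y)^m\<close>, so that \<open>G = Q F - Q + 1\<close>. Since \<open>Q F\<close> has no monomials
  of degree below \<open>m\<close>, \<open>G(0,0) = 0\<close> forces \<open>Q(0,0) = 1\<close>. All coefficients being nonnegative, no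
  cancellation occurs in \<open>Q F\<close>, so every monomial of \<open>Q F\<close> that does not occur in \<open>Q\<close> survives in
  \<open>G\<close>. If \<open>Q = 1\<close> then \<open>G = F\<close> has \<open>m + 1\<close> terms; otherwise a counting argument finds at least
  \<open>2m + 1\<close> such monomials.

  Conversely, \<open>F\<close> and the polynomials \<open>F^K - h + h F\<close>, with \<open>h\<close> a sum of \<open>s \<le> m\<close> monomials of
  degree \<open>K m\<close>, realise the counts \<open>m + 1\<close> and \<open>K m + s + m\<close>. All their monomials have degree
  divisible by \<open>m\<close>.
\<close>

section \<open>Bivariate polynomials\<close>

text \<open>A bivariate polynomial is a polynomial in \<open>y\<close> over polynomials in \<open>x\<close>.\<close>

definition coeff2 :: "'a::zero poly poly \<Rightarrow> nat \<times> nat \<Rightarrow> 'a" where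
  "coeff2 P = (\<lambda>(i, j). coeff (coeff P j) i)"

definition poly2 :: "'a::comm_semiring_0 poly poly \<Rightarrow> 'a \<Rightarrow> 'a \<Rightarrow> 'a" where
  "poly2 P x y = poly (poly P [:y:]) x"

definition poly2_of :: "bipoly \<Rightarrow> real poly poly" where
  "poly2_of c = (\<Sum>p\<in>supp2 c. monom (monom (c p) (fst p)) (snd p))"

lemma poly2_add [simp]: "poly2 (P + Q) x y = poly2 P x y + poly2 Q x y"
  and poly2_diff [simp]: "poly2 (P - Q) x y = poly2 P x y - poly2 Q x y"
  and poly2_mult [simp]: "poly2 (P * Q) x y = poly2 P x y * poly2 Q x y"
  and poly2_1 [simp]: "poly2 1 x y = 1"
  and poly2_power [simp]: "poly2 (P ^ n) x y = poly2 P x y ^ n"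
  and poly2_sum: "poly2 (sum f A) x y = (\<Sum>a\<in>A. poly2 (f a) x y)"
  for P Q :: "'a::comm_ring_1 poly poly"
  by (simp_all add: poly2_def poly_sum)

lemma coeff2_add [simp]: "coeff2 (P + Q) p = coeff2 P p + coeff2 Q p"
  and coeff2_diff [simp]: "coeff2 (P - Q) p = coeff2 P p - coeff2 Q p"
  and coeff2_0 [simp]: "coeff2 0 p = 0"
  and coeff2_1: "coeff2 1 p = (if p = (0, 0) then 1 else 0)"
  and coeff2_sum: "coeff2 (sum f A) p = (\<Sum>a\<in>A. coeff2 (f a) p)"
  for P Q :: "'a::comm_ring_1 poly poly"
  by (auto simp: coeff2_def coeff_sum split: prod.splits)

lemma coeff2_mult:
  "coeff2 (P * Q) (i, j) = (\<Sum>l\<le>j. \<Sum>k\<le>i. coeff2 P (k, l) * coeff2 Q (i - k, j - l))"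
  by (simp add: coeff2_def coeff_mult coeff_sum)

lemma coeff2_inject: "coeff2 P = coeff2 Q \<longleftrightarrow> P = Q"
proof
  assume "coeff2 P = coeff2 Q"
  then have "coeff2 P (i, j) = coeff2 Q (i, j)" for i j
    by simp
  then show "P = Q"
    by (intro poly_eqI) (simp add: coeff2_def)
qed simp

lemma coeff2_poly2_of:
  assumes "is_bipoly c"
  shows "coeff2 (poly2_of c) = c"
proof
  fix p :: "nat \<times> nat"
  have "coeff2 (poly2_of c) p = (\<Sum>q\<in>supp2 c. if q = p then c q else 0)"
    by (auto simp: coeff2_def poly2_of_def coeff_sum coeff_monom split: prod.splits intro!: sum.cong)
  also have "\<dots> = c p"
    using assms by (simp add: is_bipoly_def supp2_def)
  finally show "coeff2 (poly2_of c) p = c p" .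
qed

lemma is_bipoly_coeff2: "is_bipoly (coeff2 P)"
proof -
  define M where "M = Max ((\<lambda>l. degree (coeff P l)) ` {..degree P})"
  have "supp2 (coeff2 P) \<subseteq> {..M} \<times> {..degree P}"
  proof
    fix p
    assume "p \<in> supp2 (coeff2 P)"
    then obtain i j where p: "p = (i, j)" and nz: "coeff (coeff P j) i \<noteq> 0"
      by (cases p) (auto simp: supp2_def coeff2_def)
    then have j: "j \<le> degree P"
      by (metis coeff_0 le_degree)
    have "i \<le> degree (coeff P j)"
      using nz le_degree by blast
    also have "\<dots> \<le> M"
      unfolding M_def using j by (intro Max_ge) auto
    finally show "p \<in> {..M} \<times> {..degree P}"
      using p j by simp
  qed
  then show ?thesis
    unfolding is_bipoly_def by (rule finite_subset) simp
qed

lemma poly2_of_coeff2: "poly2_of (coeff2 P) = P"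
  by (simp add: coeff2_poly2_of is_bipoly_coeff2 flip: coeff2_inject)

lemma poly2_poly2_of: "poly2 (poly2_of c) x y = beval c x y"
  unfolding poly2_of_def poly2_sum by (simp add: beval_def poly2_def poly_monom mult.assoc)

lemma beval_coeff2: "beval (coeff2 P) x y = poly2 P x y"
  by (metis poly2_poly2_of poly2_of_coeff2)

lemma coeff_poly_const:
  "coeff (poly P [:y:]) i = poly (map_poly (\<lambda>q. coeff q i) P) y"
  by (induction P) (simp_all add: map_poly_pCons)

lemma poly2_eqI:
  fixes P Q :: "'a::{ring_char_0,idom} poly poly"
  assumes "\<And>x y. poly2 P x y = poly2 Q x y"
  shows "P = Q"
proof -
  have "poly (poly (P - Q) [:y:]) x = 0" for x y
    using assms[of x y] by (simp add: poly2_def)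
  then have "poly (P - Q) [:y:] = 0" for y
    using poly_all_0_iff_0 by blast
  then have "poly (map_poly (\<lambda>q. coeff q i) (P - Q)) y = 0" for y i
    by (metis coeff_0 coeff_poly_const)
  then have "map_poly (\<lambda>q. coeff q i) (P - Q) = 0" for i
    using poly_all_0_iff_0 by blast
  then have "coeff (coeff (P - Q) j) i = 0" for i j
    by (metis coeff_0 coeff_map_poly)
  then show ?thesis
    by (simp add: poly_eq_iff)
qed

lemma coeff2_mult_nonneg:
  fixes P Q :: "'a::linordered_idom poly poly"
  assumes "\<And>p. 0 \<le> coeff2 P p" "\<And>p. 0 \<le> coeff2 Q p"
  shows "0 \<le> coeff2 (P * Q) p"
  using assms by (cases p) (auto simp: coeff2_mult intro!: sum_nonneg)

lemma coeff2_mult_ge: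
  fixes P Q :: "'a::linordered_idom poly poly"
  assumes "\<And>p. 0 \<le> coeff2 P p" "\<And>p. 0 \<le> coeff2 Q p"
  shows "coeff2 P (i1, j1) * coeff2 Q (i2, j2) \<le> coeff2 (P * Q) (i1 + i2, j1 + j2)"
proof -
  let ?t = "\<lambda>k l. coeff2 P (k, l) * coeff2 Q (i1 + i2 - k, j1 + j2 - l)"
  have nonneg: "0 \<le> coeff2 P p * coeff2 Q q" for p q
    using assms by simp
  have "coeff2 P (i1, j1) * coeff2 Q (i2, j2) = ?t i1 j1"
    by simp
  also have "\<dots> \<le> (\<Sum>k\<le>i1 + i2. ?t k j1)"
    by (rule member_le_sum) (use nonneg in auto)
  also have "\<dots> \<le> (\<Sum>l\<le>j1 + j2. \<Sum>k\<le>i1 + i2. ?t k l)"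
    by (rule member_le_sum) (use nonneg in \<open>auto intro!: sum_nonneg\<close>)
  finally show ?thesis
    by (simp add: coeff2_mult)
qed

lemma coeff2_mult_neq_0D:
  assumes "coeff2 (P * Q) (i, j) \<noteq> 0"
  obtains i1 j1 i2 j2 where "i = i1 + i2" "j = j1 + j2"
    "coeff2 P (i1, j1) \<noteq> 0" "coeff2 Q (i2, j2) \<noteq> 0"
proof -
  have "\<exists>k\<le>i. \<exists>l\<le>j. coeff2 P (k, l) * coeff2 Q (i - k, j - l) \<noteq> 0"
  proof (rule ccontr)
    assume "\<not> ?thesis"
    then have "(\<Sum>l\<le>j. \<Sum>k\<le>i. coeff2 P (k, l) * coeff2 Q (i - k, j - l)) = 0"
      by (auto intro!: sum.neutral)
    then show False
      using assms by (simp add: coeff2_mult)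
  qed
  then obtain k l where "k \<le> i" "l \<le> j" "coeff2 P (k, l) * coeff2 Q (i - k, j - l) \<noteq> 0"
    by blast
  then have "coeff2 P (k, l) \<noteq> 0" "coeff2 Q (i - k, j - l) \<noteq> 0"
    by auto
  then show thesis
    using that[of k "i - k" l "j - l"] \<open>k \<le> i\<close> \<open>l \<le> j\<close> by simp
qed

section \<open>Products with \<open>(x + y)^m\<close> and the lower bound\<close>

definition binom_coeffs :: "nat \<Rightarrow> bipoly" where
  "binom_coeffs n = (\<lambda>(i, j). if i + j = n then of_nat (n choose i) else 0)"

definition binom_poly2 :: "nat \<Rightarrow> real poly poly" where
  "binom_poly2 n = poly2_of (binom_coeffs n)"

lemma supp2_binom_coeffs: "supp2 (binom_coeffs n) = (\<lambda>i. (i, n - i)) ` {..n}"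
  by (auto simp: supp2_def binom_coeffs_def image_iff split: if_splits)

lemma is_bipoly_binom_coeffs: "is_bipoly (binom_coeffs n)"
  by (simp add: is_bipoly_def supp2_binom_coeffs)

lemma nterms_binom_coeffs: "nterms (binom_coeffs n) = n + 1"
  by (simp add: nterms_def supp2_binom_coeffs card_image inj_on_def)

lemma binom_coeffs_nonneg: "0 \<le> binom_coeffs n p"
  by (auto simp: binom_coeffs_def split: prod.splits)

lemma beval_binom_coeffs: "beval (binom_coeffs n) x y = (x + y) ^ n"
proof -
  have "beval (binom_coeffs n) x y = (\<Sum>i\<le>n. of_real (binom_coeffs n (i, n - i)) * x ^ i * y ^ (n - i))"
    by (simp add: beval_def supp2_binom_coeffs sum.reindex inj_on_def)
  also have "\<dots> = (\<Sum>i\<le>n. of_nat (n choose i) * x ^ i * y ^ (n - i))"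
    by (intro sum.cong) (auto simp: binom_coeffs_def)
  also have "\<dots> = (x + y) ^ n"
    by (simp add: binomial_ring)
  finally show ?thesis .
qed

lemma poly2_binom_poly2 [simp]: "poly2 (binom_poly2 n) x y = (x + y) ^ n"
  by (simp add: binom_poly2_def poly2_poly2_of beval_binom_coeffs)

lemma coeff2_binom_poly2 [simp]: "coeff2 (binom_poly2 n) = binom_coeffs n"
  by (simp add: binom_poly2_def coeff2_poly2_of is_bipoly_binom_coeffs)

lemma binom_poly2_power: "binom_poly2 m ^ k = binom_poly2 (m * k)"
  by (rule poly2_eqI) (simp add: power_mult)

lemma coeff2_binom_poly2_nonneg: "0 \<le> coeff2 (binom_poly2 n) p"
  by (simp add: binom_coeffs_nonneg)

definition diag_shift :: "nat \<Rightarrow> nat \<Rightarrow> nat \<times> nat \<Rightarrow> nat \<times> nat" where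
  "diag_shift m t a = (fst a + t, snd a + (m - t))"

lemma coeff2_mult_binom_poly2_pos:
  assumes "\<And>p. 0 \<le> coeff2 Q p" "0 < coeff2 Q a" "t \<le> m"
  shows "0 < coeff2 (Q * binom_poly2 m) (diag_shift m t a)"
proof -
  have "0 < coeff2 Q (fst a, snd a) * coeff2 (binom_poly2 m) (t, m - t)"
    using assms(2,3) by (simp add: binom_coeffs_def)
  also have "\<dots> \<le> coeff2 (Q * binom_poly2 m) (diag_shift m t a)"
    unfolding diag_shift_def by (rule coeff2_mult_ge[OF assms(1) coeff2_binom_poly2_nonneg])
  finally show ?thesis .
qed

lemma coeff2_mult_binom_poly2_eq_0:
  assumes "i + j < m"
  shows "coeff2 (Q * binom_poly2 m) (i, j) = 0"
proof (rule ccontr)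
  assume "coeff2 (Q * binom_poly2 m) (i, j) \<noteq> 0"
  then show False
    by (rule coeff2_mult_neq_0D) (use assms in \<open>auto simp: binom_coeffs_def split: if_splits\<close>)
qed

text \<open>Besides the copy of \<open>A\<close> shifted by \<open>y^m\<close>, the other shifts of \<open>(0,0)\<close> and of an element
  \<open>b \<noteq> (0,0)\<close> with the largest \<open>x\<close>-exponent among those of its total degree contribute \<open>m\<close> new
  points each, and at most \<open>card A - 1\<close> of all these points lie in \<open>A\<close>, as \<open>(0,0)\<close> is not one of them.\<close>
lemma card_diag_shifts_diff:
  fixes A :: "(nat \<times> nat) set"
  assumes "finite A" "(0, 0) \<in> A" "A \<noteq> {(0, 0)}" "0 < m"
  shows "2 * m + 1 \<le> card ((\<lambda>(a, t). diag_shift m t a) ` (A \<times> {..m}) - A)"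
proof -
  let ?deg = "\<lambda>a::nat \<times> nat. fst a + snd a"
  obtain b0 where "b0 \<in> A" "b0 \<noteq> (0, 0)"
    using assms(2,3) by blast
  define Ad where "Ad = {a \<in> A. ?deg a = ?deg b0}"
  have "finite Ad" "b0 \<in> Ad"
    using assms(1) \<open>b0 \<in> A\<close> by (auto simp: Ad_def)
  then have "Max (fst ` Ad) \<in> fst ` Ad"
    by (intro Max_in) auto
  then obtain b where "b \<in> Ad" "fst b = Max (fst ` Ad)"
    by force
  have b_max: "fst a \<le> fst b" if "a \<in> Ad" for a
    using \<open>finite Ad\<close> that \<open>fst b = _\<close> by (simp add: Max_ge)
  have b: "b \<in> A" "0 < ?deg b"
    using \<open>b \<in> Ad\<close> \<open>b0 \<noteq> (0, 0)\<close> by (auto simp: Ad_def prod_eq_iff)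
  define S where "S = diag_shift m 0 ` A"
  define R0 where "R0 = (\<lambda>t. diag_shift m t (0, 0)) ` {1..m}"
  define Rb where "Rb = (\<lambda>t. diag_shift m t b) ` {1..m}"
  have fin: "finite S" "finite R0" "finite Rb"
    using assms(1) by (auto simp: S_def R0_def Rb_def)
  have "S \<inter> R0 = {}"
    by (auto simp: S_def R0_def diag_shift_def)
  moreover have "S \<inter> Rb = {}"
  proof (rule ccontr)
    assume "S \<inter> Rb \<noteq> {}"
    then obtain a t where "a \<in> A" "t \<in> {1..m}" "diag_shift m 0 a = diag_shift m t b"
      unfolding S_def Rb_def by blast
    then have "fst a = fst b + t" "snd a + m = snd b + (m - t)"
      by (simp_all add: diag_shift_def prod_eq_iff)
    then have "a \<in> Ad"
      using \<open>a \<in> A\<close> \<open>t \<in> {1..m}\<close> \<open>b \<in> Ad\<close> by (auto simp: Ad_def)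
    then show False
      using b_max[of a] \<open>fst a = fst b + t\<close> \<open>t \<in> {1..m}\<close> by simp
  qed
  moreover have "R0 \<inter> Rb = {}"
    using b(2) by (auto simp: R0_def Rb_def diag_shift_def)
  moreover have "card S = card A" "card R0 = m" "card Rb = m"
    unfolding S_def R0_def Rb_def by (subst card_image; force simp: inj_on_def diag_shift_def)+
  ultimately have card_B: "card (S \<union> R0 \<union> Rb) = card A + 2 * m"
    using fin by (simp add: card_Un_disjoint Int_Un_distrib2)
  have "(0, 0) \<notin> S \<union> R0 \<union> Rb"
    using assms(4) by (auto simp: S_def R0_def Rb_def diag_shift_def)
  then have "card ((S \<union> R0 \<union> Rb) \<inter> A) \<le> card (A - {(0, 0)})"
    using assms(1) by (intro card_mono) auto
  moreover have "card ((S \<union> R0 \<union> Rb) - A) = card (S \<union> R0 \<union> Rb) - card ((S \<union> R0 \<union> Rb) \<inter> A)"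
    using fin by (simp add: card_Diff_subset_Int)
  moreover have "card (A - {(0, 0)}) = card A - 1" "0 < card A"
    using assms(1,2) card_gt_0_iff by auto
  ultimately have "2 * m + 1 \<le> card ((S \<union> R0 \<union> Rb) - A)"
    using card_B by linarith
  also have "\<dots> \<le> card ((\<lambda>(a, t). diag_shift m t a) ` (A \<times> {..m}) - A)"
    using assms(1,2) b(1) by (intro card_mono) (auto simp: S_def R0_def Rb_def)
  finally show ?thesis .
qed

lemma admissibleE:
  assumes "0 < m" "admissible m \<eta> G"
  obtains Q where "\<And>p. 0 \<le> coeff2 Q p" "coeff2 Q (0, 0) = 1"
    and "\<And>p. G p = coeff2 (Q * binom_poly2 m) p - coeff2 Q p + (if p = (0, 0) then 1 else 0)"
proof -
  from assms(2) obtain H where G: "is_bipoly G" "G (0, 0) = 0"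
    and H: "is_bipoly H" "\<And>p. 0 \<le> H p"
    and GH: "\<And>x y :: real. beval G x y = (x + y) ^ m - beval H x y + beval H x y * (x + y) ^ m"
    unfolding admissible_def by blast
  define Q where "Q = poly2_of H + 1"
  have "poly2_of G = Q * binom_poly2 m - Q + 1"
    by (rule poly2_eqI) (simp add: Q_def poly2_poly2_of GH algebra_simps)
  then have "coeff2 (poly2_of G) p = coeff2 (Q * binom_poly2 m - Q + 1) p" for p
    by simp
  then have coeff_G: "G p = coeff2 (Q * binom_poly2 m) p - coeff2 Q p + (if p = (0, 0) then 1 else 0)"
    for p
    by (simp add: coeff2_poly2_of G(1) coeff2_1)
  have "coeff2 (Q * binom_poly2 m) (0, 0) = 0"
    using assms(1) by (intro coeff2_mult_binom_poly2_eq_0) simp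
  then have "coeff2 Q (0, 0) = 1"
    using coeff_G[of "(0, 0)"] G(2) by simp
  moreover have "0 \<le> coeff2 Q p" for p
    using H(2) by (simp add: Q_def coeff2_poly2_of H(1) coeff2_1)
  ultimately show thesis
    using that coeff_G by blast
qed

lemma admissible_cases:
  assumes "0 < m" "admissible m \<eta> G"
  shows "G = binom_coeffs m \<or> 2 * m + 1 \<le> nterms G"
proof -
  obtain Q where Q_nonneg: "\<And>p. 0 \<le> coeff2 Q p" and "coeff2 Q (0, 0) = 1"
    and coeff_G: "\<And>p. G p = coeff2 (Q * binom_poly2 m) p - coeff2 Q p + (if p = (0, 0) then 1 else 0)"
    using admissibleE[OF assms] by blast
  let ?A = "supp2 (coeff2 Q)"
  have "(0, 0) \<in> ?A"
    using \<open>coeff2 Q (0, 0) = 1\<close> by (simp add: supp2_def)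
  show ?thesis
  proof (cases "?A = {(0, 0)}")
    case True
    have "coeff2 Q p = coeff2 1 p" for p
      using True \<open>coeff2 Q (0, 0) = 1\<close> by (cases "p = (0, 0)") (auto simp: coeff2_1 supp2_def)
    then have "Q = 1"
      by (simp add: ext flip: coeff2_inject)
    then have "G p = binom_coeffs m p" for p
      using coeff_G[of p] by (simp add: coeff2_1)
    then show ?thesis
      by auto
  next
    case False
    have "finite ?A"
      using is_bipoly_coeff2 by (simp add: is_bipoly_def)
    then have "2 * m + 1 \<le> card ((\<lambda>(a, t). diag_shift m t a) ` (?A \<times> {..m}) - ?A)"
      using \<open>(0, 0) \<in> ?A\<close> False assms(1) by (rule card_diag_shifts_diff)
    also have "\<dots> \<le> nterms G"
      unfolding nterms_def
    proof (rule card_mono)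
      show "finite (supp2 G)"
        using assms(2) by (simp add: admissible_def is_bipoly_def)
      show "(\<lambda>(a, t). diag_shift m t a) ` (?A \<times> {..m}) - ?A \<subseteq> supp2 G"
      proof
        fix p
        assume p: "p \<in> (\<lambda>(a, t). diag_shift m t a) ` (?A \<times> {..m}) - ?A"
        then have new: "p \<notin> ?A"
          by blast
        obtain a t where "a \<in> ?A" "t \<le> m" and p: "p = diag_shift m t a"
          using p by auto
        have "0 < coeff2 Q a"
          using \<open>a \<in> ?A\<close> Q_nonneg[of a] by (simp add: supp2_def less_le)
        then have "0 < coeff2 (Q * binom_poly2 m) p"
          unfolding p using Q_nonneg \<open>t \<le> m\<close> by (intro coeff2_mult_binom_poly2_pos)
        moreover have "p \<noteq> (0, 0)"
          using new \<open>(0, 0) \<in> ?A\<close> by auto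
        ultimately show "p \<in> supp2 G"
          using new coeff_G[of p] by (simp add: supp2_def)
      qed
    qed
    finally show ?thesis ..
  qed
qed

section \<open>The witnesses\<close>

lemma beval_mult_root_of_unity:
  fixes \<eta> x y :: complex
  assumes "\<eta> ^ m = 1" "\<And>p. p \<in> supp2 c \<Longrightarrow> m dvd fst p + snd p"
  shows "beval c (\<eta> * x) (\<eta> * y) = beval c x y"
  unfolding beval_def
proof (intro sum.cong refl)
  fix p
  assume "p \<in> supp2 c"
  then obtain k where "fst p + snd p = m * k"
    using assms(2) by blast
  then have "\<eta> ^ fst p * \<eta> ^ snd p = 1"
    using assms(1) by (simp add: power_mult flip: power_add)
  then show "of_real (c p) * (\<eta> * x) ^ fst p * (\<eta> * y) ^ snd p = of_real (c p) * x ^ fst p * y ^ snd p"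
    by (simp add: power_mult_distrib algebra_simps)
qed

lemma admissible_coeff2I:
  assumes "\<eta> ^ m = 1"
    and "\<And>p. 0 \<le> coeff2 G p" "coeff2 G (0, 0) = 0"
    and "\<And>p. p \<in> supp2 (coeff2 G) \<Longrightarrow> m dvd fst p + snd p"
    and "\<And>p. 0 \<le> coeff2 H p"
    and "G = binom_poly2 m - H + H * binom_poly2 m"
  shows "admissible m \<eta> (coeff2 G)"
proof -
  have "beval (coeff2 G) (\<eta> * x) (\<eta> * y) = beval (coeff2 G) x y" for x y :: complex
    using assms(1,4) by (rule beval_mult_root_of_unity)
  moreover have "beval (coeff2 G) x y = 1" if "x + y = 1" for x y :: real
    using that by (simp add: beval_coeff2 assms(6))
  moreover have "beval (coeff2 G) x y
      = (x + y) ^ m - beval (coeff2 H) x y + beval (coeff2 H) x y * (x + y) ^ m" for x y :: real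
    by (simp add: beval_coeff2 assms(6))
  ultimately show ?thesis
    unfolding admissible_def using assms(2,3,5) is_bipoly_coeff2 by blast
qed

lemma admissible_binom_coeffs:
  assumes "0 < m" "\<eta> ^ m = 1"
  shows "admissible m \<eta> (binom_coeffs m)"
proof -
  have "admissible m \<eta> (coeff2 (binom_poly2 m))"
  proof (rule admissible_coeff2I[where H = 0])
    show "coeff2 (binom_poly2 m) (0, 0) = 0"
      using assms(1) by (simp add: binom_coeffs_def)
    show "m dvd fst p + snd p" if "p \<in> supp2 (coeff2 (binom_poly2 m))" for p
      using that by (auto simp: supp2_binom_coeffs)
  qed (simp_all add: assms(2) binom_coeffs_nonneg)
  then show ?thesis
    by simp
qed

lemma two_le_binomial:
  assumes "0 < k" "k < n"
  shows "2 \<le> n choose k"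
proof -
  obtain n' k' where "n = Suc n'" "k = Suc k'"
    using assms by (metis gr0_implies_Suc less_imp_Suc_add)
  moreover have "0 < n' choose k'" "0 < n' choose Suc k'"
    using assms calculation by auto
  ultimately show ?thesis
    by (simp del: zero_less_binomial_iff)
qed

lemma sum_powers_mult_diff_1:
  fixes x :: "'a::comm_ring_1"
  assumes "1 \<le> K"
  shows "(\<Sum>k\<in>{1..<K}. x ^ k) * (x - 1) = x ^ K - x"
  using assms
proof (induction K rule: dec_induct)
  case (step K)
  then show ?case
    by (simp add: sum.atLeastLessThan_Suc algebra_simps)
qed simp

lemma supp2_add_nonneg:
  assumes "\<And>p. 0 \<le> c p" "\<And>p. 0 \<le> d p"
  shows "supp2 (\<lambda>p. c p + d p) = supp2 c \<union> supp2 d"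
  using assms by (auto simp: supp2_def add_nonneg_eq_0_iff)

definition staircase :: "nat \<Rightarrow> nat \<Rightarrow> bipoly" where
  "staircase n s = (\<lambda>(i, j). if i < s \<and> i + j = n then 1 else 0)"

lemma staircase_nonneg: "0 \<le> staircase n s p"
  by (simp add: staircase_def split: prod.splits)

lemma coeff2_poly2_of_staircase [simp]:
  "coeff2 (poly2_of (staircase n s)) = staircase n s"
proof (rule coeff2_poly2_of)
  have "supp2 (staircase n s) \<subseteq> {..<s} \<times> {..n}"
    by (auto simp: supp2_def staircase_def split: if_splits)
  then show "is_bipoly (staircase n s)"
    unfolding is_bipoly_def by (rule finite_subset) simp
qed

lemma coeff2_binom_minus_staircase:
  assumes "1 \<le> s" "s \<le> n"
  shows "0 \<le> coeff2 (binom_poly2 n - poly2_of (staircase n s)) p"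
    and "supp2 (coeff2 (binom_poly2 n - poly2_of (staircase n s))) = (\<lambda>i. (i, n - i)) ` {1..n}"
proof -
  have coeff: "coeff2 (binom_poly2 n - poly2_of (staircase n s)) (i, j)
      = (if i + j = n then real (n choose i) - (if i < s then 1 else 0) else 0)" for i j
    by (simp add: binom_coeffs_def) (simp add: staircase_def)
  have one_le: "1 \<le> real (n choose i)" if "i \<le> n" for i
    using that by (simp add: Suc_le_eq)
  have pos: "0 < real (n choose i) - (if i < s then 1 else 0)" if "0 < i" "i \<le> n" for i
  proof (cases "i < s")
    case True
    then have "2 \<le> n choose i"
      using that assms(2) by (intro two_le_binomial) auto
    then show ?thesis
      using True by simp
  next
    case False
    then show ?thesis
      using one_le that(2) by simp
  qed
  show "0 \<le> coeff2 (binom_poly2 n - poly2_of (staircase n s)) p"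
    using one_le by (cases p) (auto simp: coeff simp del: coeff2_diff)
  have nz: "coeff2 (binom_poly2 n - poly2_of (staircase n s)) (i, j) \<noteq> 0 \<longleftrightarrow> i + j = n \<and> 0 < i"
    for i j
    using pos[of i] assms(1) by (cases "i = 0") (auto simp: coeff simp del: coeff2_diff)
  show "supp2 (coeff2 (binom_poly2 n - poly2_of (staircase n s))) = (\<lambda>i. (i, n - i)) ` {1..n}"
  proof (intro set_eqI iffI)
    fix p
    assume "p \<in> supp2 (coeff2 (binom_poly2 n - poly2_of (staircase n s)))"
    then obtain i j where "p = (i, j)" "i + j = n" "0 < i"
      using nz by (cases p) (simp add: supp2_def del: coeff2_diff)
    then show "p \<in> (\<lambda>i. (i, n - i)) ` {1..n}"
      by force
  next
    fix p
    assume "p \<in> (\<lambda>i. (i, n - i)) ` {1..n}"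
    then obtain i where "1 \<le> i" "i \<le> n" "p = (i, n - i)"
      by auto
    then show "p \<in> supp2 (coeff2 (binom_poly2 n - poly2_of (staircase n s)))"
      using nz[of i "n - i"] by (simp add: supp2_def del: coeff2_diff)
  qed
qed

lemma coeff2_staircase_mult_binom:
  assumes "1 \<le> s" "s \<le> n + 1"
  shows "0 \<le> coeff2 (poly2_of (staircase n s) * binom_poly2 m) p"
    and "supp2 (coeff2 (poly2_of (staircase n s) * binom_poly2 m)) = (\<lambda>i. (i, n + m - i)) ` {..<s + m}"
proof -
  have h_nonneg: "0 \<le> coeff2 (poly2_of (staircase n s)) p" for p
    by (simp add: staircase_nonneg)
  show nonneg: "0 \<le> coeff2 (poly2_of (staircase n s) * binom_poly2 m) p" for p
    using h_nonneg coeff2_binom_poly2_nonneg by (rule coeff2_mult_nonneg)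
  have pos: "0 < coeff2 (poly2_of (staircase n s) * binom_poly2 m) (i, n + m - i)" if "i < s + m" for i
  proof -
    \<comment> \<open>take as much of \<open>x^i\<close> as possible from \<open>h\<close>, the rest (at most \<open>x^m\<close>) from \<open>(x + y)^m\<close>\<close>
    define i1 where "i1 = min i (s - 1)"
    define i2 where "i2 = i - i1"
    have "i1 < s" "i1 \<le> n" "i2 \<le> m" "i = i1 + i2"
      using assms that by (auto simp: i1_def i2_def)
    then have "0 < coeff2 (poly2_of (staircase n s)) (i1, n - i1) * coeff2 (binom_poly2 m) (i2, m - i2)"
      by (simp add: binom_coeffs_def) (simp add: staircase_def)
    also have "\<dots> \<le> coeff2 (poly2_of (staircase n s) * binom_poly2 m) (i1 + i2, (n - i1) + (m - i2))"
      using h_nonneg coeff2_binom_poly2_nonneg by (rule coeff2_mult_ge)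
    also have "(i1 + i2, (n - i1) + (m - i2)) = (i, n + m - i)"
      using \<open>i1 \<le> n\<close> \<open>i2 \<le> m\<close> \<open>i = i1 + i2\<close> by simp
    finally show ?thesis .
  qed
  show "supp2 (coeff2 (poly2_of (staircase n s) * binom_poly2 m)) = (\<lambda>i. (i, n + m - i)) ` {..<s + m}"
  proof (intro set_eqI iffI)
    fix p
    assume "p \<in> supp2 (coeff2 (poly2_of (staircase n s) * binom_poly2 m))"
    then obtain i j where p: "p = (i, j)" and "coeff2 (poly2_of (staircase n s) * binom_poly2 m) (i, j) \<noteq> 0"
      by (cases p) (simp add: supp2_def)
    then obtain i1 j1 i2 j2 where "i = i1 + i2" "j = j1 + j2"
      "staircase n s (i1, j1) \<noteq> 0" "binom_coeffs m (i2, j2) \<noteq> 0"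
      by (auto elim: coeff2_mult_neq_0D)
    then have "i < s + m" "j = n + m - i"
      by (auto simp: staircase_def binom_coeffs_def split: if_splits)
    then show "p \<in> (\<lambda>i. (i, n + m - i)) ` {..<s + m}"
      using p by simp
  next
    fix p
    assume "p \<in> (\<lambda>i. (i, n + m - i)) ` {..<s + m}"
    then obtain i where "i < s + m" "p = (i, n + m - i)"
      by auto
    then show "p \<in> supp2 (coeff2 (poly2_of (staircase n s) * binom_poly2 m))"
      using pos[of i] by (simp add: supp2_def)
  qed
qed

text \<open>With \<open>F = (x + y)^m\<close>, \<open>n = K m\<close> and \<open>h = \<Sum>i<s. x^i y^(n - i)\<close>, the witness is
  \<open>G = F^K - h + h F\<close> with \<open>H = F + \<dots> + F^(K - 1) + h\<close>. Subtracting \<open>h\<close> cancels only the monomial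
  \<open>y^n\<close> of \<open>F^K\<close>, and \<open>h F\<close> has exactly \<open>s + m\<close> monomials, all of degree \<open>n + m\<close>.\<close>
definition stair_witness :: "nat \<Rightarrow> nat \<Rightarrow> nat \<Rightarrow> real poly poly" where
  "stair_witness m n s =
     binom_poly2 n - poly2_of (staircase n s) + poly2_of (staircase n s) * binom_poly2 m"

lemma coeff2_stair_witness:
  assumes "1 \<le> s" "s \<le> m" "m \<le> n"
  shows "0 \<le> coeff2 (stair_witness m n s) p"
    and "supp2 (coeff2 (stair_witness m n s))
      = (\<lambda>i. (i, n - i)) ` {1..n} \<union> (\<lambda>i. (i, n + m - i)) ` {..<s + m}"
proof -
  let ?h = "poly2_of (staircase n s)"
  note low = coeff2_binom_minus_staircase[of s n]
  note high = coeff2_staircase_mult_binom[of s n m]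
  show "0 \<le> coeff2 (stair_witness m n s) p"
    using low(1) high(1) assms by (simp add: stair_witness_def add_nonneg_nonneg)
  have "coeff2 (stair_witness m n s) = (\<lambda>p. coeff2 (binom_poly2 n - ?h) p + coeff2 (?h * binom_poly2 m) p)"
    by (auto simp: stair_witness_def)
  then show "supp2 (coeff2 (stair_witness m n s))
      = (\<lambda>i. (i, n - i)) ` {1..n} \<union> (\<lambda>i. (i, n + m - i)) ` {..<s + m}"
    using low high assms by (simp add: supp2_add_nonneg del: coeff2_diff)
qed

lemma nterms_stair_witness:
  assumes "0 < m" "1 \<le> s" "s \<le> m" "m \<le> n"
  shows "nterms (coeff2 (stair_witness m n s)) = n + s + m"
proof -
  have "(\<lambda>i. (i, n - i)) ` {1..n} \<inter> (\<lambda>i. (i, n + m - i)) ` {..<s + m} = {}"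
    using assms by auto
  then show ?thesis
    using assms(2-4) unfolding nterms_def coeff2_stair_witness(2)[OF assms(2-4)]
    by (simp add: card_Un_disjoint card_image inj_on_def)
qed

lemma admissible_stair_witness:
  assumes "0 < m" "\<eta> ^ m = 1" "1 \<le> K" "1 \<le> s" "s \<le> m"
  shows "admissible m \<eta> (coeff2 (stair_witness m (K * m) s))"
proof -
  define n where "n = K * m"
  let ?F = "binom_poly2 m"
  let ?h = "poly2_of (staircase n s)"
  define H where "H = (\<Sum>k\<in>{1..<K}. binom_poly2 (m * k)) + ?h"
  have "m \<le> n"
    using assms(3) by (simp add: n_def)
  note coeff_G = coeff2_stair_witness[OF assms(4,5) \<open>m \<le> n\<close>]
  have degree_G: "fst p + snd p = n \<or> fst p + snd p = n + m"
    if "p \<in> supp2 (coeff2 (stair_witness m n s))" for p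
    using that \<open>m \<le> n\<close> assms(5) unfolding coeff_G(2) by auto
  have "admissible m \<eta> (coeff2 (stair_witness m n s))"
  proof (rule admissible_coeff2I[OF assms(2) coeff_G(1)])
    show "coeff2 (stair_witness m n s) (0, 0) = 0"
      using degree_G[of "(0, 0)"] assms(1) \<open>m \<le> n\<close> by (fastforce simp: supp2_def)
    show "m dvd fst p + snd p" if "p \<in> supp2 (coeff2 (stair_witness m n s))" for p
      using degree_G[OF that] by (auto simp: n_def)
    show "0 \<le> coeff2 H p" for p
      by (simp add: H_def coeff2_sum binom_coeffs_nonneg staircase_nonneg sum_nonneg)
    have "binom_poly2 n = ?F ^ K" "H = (\<Sum>k\<in>{1..<K}. ?F ^ k) + ?h"
      by (simp_all add: n_def H_def binom_poly2_power mult.commute)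
    then show "stair_witness m n s = ?F - H + H * ?F"
      using sum_powers_mult_diff_1[OF assms(3), of ?F] by (simp add: stair_witness_def algebra_simps)
  qed
  then show ?thesis
    by (simp add: n_def)
qed

lemma nat_eq_mult_add_bounded:
  fixes m N :: nat
  assumes "0 < m" "2 * m + 1 \<le> N"
  obtains K s where "1 \<le> K" "1 \<le> s" "s \<le> m" "N = K * m + s + m"
proof -
  define q r where "q = (N - 1) div m" and "r = (N - 1) mod m"
  have "N - 1 = q * m + r" "r < m"
    using assms(1) by (simp_all add: q_def r_def)
  have "2 \<le> q"
  proof (rule ccontr)
    assume "\<not> 2 \<le> q"
    then have "q * m \<le> 1 * m"
      by (intro mult_le_mono1) simp
    then show False
      using \<open>N - 1 = q * m + r\<close> \<open>r < m\<close> assms(2) by linarith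
  qed
  show thesis
  proof (rule that[of "q - 1" "r + 1"])
    show "N = (q - 1) * m + (r + 1) + m"
      using \<open>N - 1 = q * m + r\<close> \<open>2 \<le> q\<close> assms(2) by (cases q) auto
  qed (use \<open>2 \<le> q\<close> \<open>r < m\<close> in auto)
qed

theorem mainTheorem8:
  fixes m :: nat and \<eta> :: complex
  assumes "m \<ge> 2"
    and "\<eta> ^ m = 1"
    and "\<forall>k. 0 < k \<and> k < m \<longrightarrow> \<eta> ^ k \<noteq> 1"
  shows "(\<forall>G. admissible m \<eta> G \<longrightarrow> nterms G = m + 1 \<or> nterms G \<ge> 2 * m + 1)
       \<and> (\<exists>G. admissible m \<eta> G \<and> nterms G = m + 1)
       \<and> (\<forall>N. N \<ge> 2 * m + 1 \<longrightarrow> (\<exists>G. admissible m \<eta> G \<and> nterms G = N))"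
proof (intro conjI allI impI)
  have "0 < m"
    using assms(1) by simp
  show "nterms G = m + 1 \<or> nterms G \<ge> 2 * m + 1" if "admissible m \<eta> G" for G
    using admissible_cases[OF \<open>0 < m\<close> that] nterms_binom_coeffs by auto
  show "\<exists>G. admissible m \<eta> G \<and> nterms G = m + 1"
    using admissible_binom_coeffs[OF \<open>0 < m\<close> assms(2)] nterms_binom_coeffs by blast
  show "\<exists>G. admissible m \<eta> G \<and> nterms G = N" if N: "N \<ge> 2 * m + 1" for N
  proof -
    obtain K s where "1 \<le> K" "1 \<le> s" "s \<le> m" "N = K * m + s + m"
      using nat_eq_mult_add_bounded[OF \<open>0 < m\<close> N] .
    moreover from this have "m \<le> K * m"
      by simp
    ultimately show ?thesis
      using admissible_stair_witness[OF \<open>0 < m\<close> assms(2)] nterms_stair_witness[OF \<open>0 < m\<close>]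
      by blast
  qed
qed

end
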